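(* There exist two tDCWs $\mathcal{D}_1,\mathcal{D}_2$ with $L(\mathcal{D}_1)=L(\mathcal{D}_2)$ that are both nice and minimal (no tDCW recognizing the same language has fewer states) and that are not isomorphic. Likewise, there exist two tDBWs recognizing the same language, both nice and minimal among tDBWs for that language, that are not isomorphic.
   Context: A tNCW is $\mathcal{A}=\langle\Sigma,Q,q_0,\delta,\alpha\rangle$: finite alphabet $\Sigma$, finite state set $Q$, initial state $q_0$, transition function $\delta:Q\times\Sigma\to 2^Q\setminus\{\emptyset\}$ with transition relation $\Delta=\{\langle q,\sigma,s\rangle:s\in\delta(q,\sigma)\}$, and $\alpha\subseteq\Delta$; its size is $|Q|$. $\alpha$-transitions are those in $\alpha$, $\bar\alpha$-transitions those in $\Delta\setminus\alpha$; $\delta^{\alpha}(q,\sigma)$, $\delta^{\bar\alpha}(q,\sigma)$ denote the $\sigma$-successors via $\alpha$-, resp. $\bar\alpha$-transitions. A run on $w=\sigma_1\sigma_2\cdots$ is $r_0r_1\cdots$ with $r_0=q_0$, $r_{i+1}\in\delta(r_i,\sigma_{i+1})$; it is accepting (co-Büchi) iff it traverses $\alpha$-transitions only finitely often. A tDCW is a tNCW with $|\delta(q,\sigma)|=1$ for all $q,\sigma$. A tDBW has the same syntax as a tDCW but a run is accepting iff it traverses $\alpha$-transitions infinitely often. $\mathcal{A}^q$ is $\mathcal{A}$ with initial state $q$; $q\sim s$ iff $L(\mathcal{A}^q)=L(\mathcal{A}^s)$. GFG: there is $f:\Sigma^*\to Q$ with $f(\epsilon)=q_0$, $\langle f(u),\sigma,f(u\sigma)\rangle\in\Delta$,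 and $f$'s run on every accepted word accepting; $q$ is GFG if $\mathcal{A}^q$ is. Nice: all states reachable and GFG, semantically deterministic (all $\sigma$-successors of a state pairwise $\sim$), safe deterministic ($|\delta^{\bar\alpha}(q,\sigma)|\le1$), and normal (a path of $\bar\alpha$-transitions from $q$ to $s$ implies one from $s$ to $q$); these notions are applied to tDBWs with the same structural meaning. For automata $\mathcal{A},\mathcal{B}$ with state sets $Q_\mathcal{A},Q_\mathcal{B}$, they are isomorphic if there is a bijection $\kappa:Q_\mathcal{A}\to Q_\mathcal{B}$ such that for all $q,q'\in Q_\mathcal{A}$ and $\sigma$: $q'\in\delta^{\bar\alpha}_\mathcal{A}(q,\sigma)$ iff $\kappa(q')\in\delta^{\bar\alpha}_\mathcal{B}(\kappa(q),\sigma)$, and $q'\in\delta^{\alpha}_\mathcal{A}(q,\sigma)$ iff $\kappa(q')\in\delta^{\alpha}_\mathcal{B}(\kappa(q),\sigma)$. *)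

theory Defs
  imports Main
begin

text \<open>The transition relation
Delta and the set alpha of alpha-transitions are sets of triples (q, sigma, s).\<close>

record aut =
  alph   :: "nat set"
  states :: "nat set"
  init   :: nat
  trans  :: "(nat \<times> nat \<times> nat) set"
  acc    :: "(nat \<times> nat \<times> nat) set"

datatype cond = CoBuchi | Buchi

definition delta :: "aut \<Rightarrow> nat \<Rightarrow> nat \<Rightarrow> nat set" where
  "delta A q a = {s. (q, a, s) \<in> trans A}"

definition delta_acc :: "aut \<Rightarrow> nat \<Rightarrow> nat \<Rightarrow> nat set" where
  "delta_acc A q a = {s. (q, a, s) \<in> trans A \<and> (q, a, s) \<in> acc A}"

definition delta_nacc :: "aut \<Rightarrow> nat \<Rightarrow> nat \<Rightarrow> nat set" where
  "delta_nacc A q a = {s. (q, a, s) \<in> trans A \<and> (q, a, s) \<notin> acc A}"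

definition wf_aut :: "aut \<Rightarrow> bool" where
  "wf_aut A \<longleftrightarrow> finite (alph A) \<and> finite (states A) \<and> init A \<in> states A \<and>
     trans A \<subseteq> states A \<times> alph A \<times> states A \<and>
     (\<forall>q\<in>states A. \<forall>a\<in>alph A. delta A q a \<noteq> {}) \<and>
     acc A \<subseteq> trans A"

definition deterministic :: "aut \<Rightarrow> bool" where
  "deterministic A \<longleftrightarrow> wf_aut A \<and>
     (\<forall>q\<in>states A. \<forall>a\<in>alph A. card (delta A q a) = 1)"

definition is_word :: "aut \<Rightarrow> (nat \<Rightarrow> nat) \<Rightarrow> bool" where
  "is_word A w \<longleftrightarrow> (\<forall>i. w i \<in> alph A)"

definition is_run :: "aut \<Rightarrow> (nat \<Rightarrow> nat) \<Rightarrow> (nat \<Rightarrow> nat) \<Rightarrow> bool" where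
  "is_run A w r \<longleftrightarrow> r 0 = init A \<and> (\<forall>i. (r i, w i, r (Suc i)) \<in> trans A)"

definition accepting :: "cond \<Rightarrow> aut \<Rightarrow> (nat \<Rightarrow> nat) \<Rightarrow> (nat \<Rightarrow> nat) \<Rightarrow> bool" where
  "accepting c A w r \<longleftrightarrow>
     (case c of
        CoBuchi \<Rightarrow> finite {i. (r i, w i, r (Suc i)) \<in> acc A}
      | Buchi \<Rightarrow> infinite {i. (r i, w i, r (Suc i)) \<in> acc A})"

definition lang :: "cond \<Rightarrow> aut \<Rightarrow> (nat \<Rightarrow> nat) set" where
  "lang c A = {w. is_word A w \<and> (\<exists>r. is_run A w r \<and> accepting c A w r)}"

definition from_state :: "aut \<Rightarrow> nat \<Rightarrow> aut" where
  "from_state A q = A\<lparr>init := q\<rparr>"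

definition equiv_states :: "cond \<Rightarrow> aut \<Rightarrow> nat \<Rightarrow> nat \<Rightarrow> bool" where
  "equiv_states c A q s \<longleftrightarrow> lang c (from_state A q) = lang c (from_state A s)"

definition gfg :: "cond \<Rightarrow> aut \<Rightarrow> bool" where
  "gfg c A \<longleftrightarrow> (\<exists>f :: nat list \<Rightarrow> nat.
     f [] = init A \<and>
     (\<forall>u a. set u \<subseteq> alph A \<longrightarrow> a \<in> alph A \<longrightarrow> (f u, a, f (u @ [a])) \<in> trans A) \<and>
     (\<forall>w\<in>lang c A. accepting c A w (\<lambda>i. f (map w [0..<i]))))"

definition reachable :: "aut \<Rightarrow> nat set" where
  "reachable A = {s. (init A, s) \<in> {(q, s). \<exists>a. (q, a, s) \<in> trans A}\<^sup>*}"

definition safe_rel :: "aut \<Rightarrow> (nat \<times> nat) set" where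
  "safe_rel A = {(q, s). \<exists>a. (q, a, s) \<in> trans A \<and> (q, a, s) \<notin> acc A}"

definition nice :: "cond \<Rightarrow> aut \<Rightarrow> bool" where
  "nice c A \<longleftrightarrow>
     (\<forall>q\<in>states A. q \<in> reachable A \<and> gfg c (from_state A q)) \<and>
     (\<forall>q\<in>states A. \<forall>a\<in>alph A. \<forall>s\<in>delta A q a. \<forall>s'\<in>delta A q a. equiv_states c A s s') \<and>
     (\<forall>q\<in>states A. \<forall>a\<in>alph A. card (delta_nacc A q a) \<le> 1) \<and>
     (\<forall>q s. (q, s) \<in> (safe_rel A)\<^sup>* \<longrightarrow> (s, q) \<in> (safe_rel A)\<^sup>*)"

definition minimal_det :: "cond \<Rightarrow> aut \<Rightarrow> bool" where
  "minimal_det c A \<longleftrightarrow> deterministic A \<and>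
     (\<forall>B. deterministic B \<longrightarrow> alph B = alph A \<longrightarrow> lang c B = lang c A \<longrightarrow>
          card (states A) \<le> card (states B))"

definition isomorphic :: "aut \<Rightarrow> aut \<Rightarrow> bool" where
  "isomorphic A B \<longleftrightarrow> (\<exists>\<kappa>. bij_betw \<kappa> (states A) (states B) \<and>
     (\<forall>q\<in>states A. \<forall>q'\<in>states A. \<forall>a.
        (q' \<in> delta_nacc A q a \<longleftrightarrow> \<kappa> q' \<in> delta_nacc B (\<kappa> q) a) \<and>
        (q' \<in> delta_acc A q a \<longleftrightarrow> \<kappa> q' \<in> delta_acc B (\<kappa> q) a)))"

end

theory Submission
  imports Defs
begin

text \<open>Over the alphabet {0,1,2}, the words that are eventually constantly 0 or eventually
constantly 1 are recognized by a two-state tDCW in which the letters 0 and 1 reset the state to 0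
resp. 1 and only the self-loops on these letters are safe.  The letter 2 may either fix or swap
the two states without changing the language; the two choices give non-isomorphic automata,
since only the first has \<alpha>-self-loops on 2.  One state never suffices: with safe loops on 0
and 1 it would also accept the alternating word 0101....  Deterministic Buechi and co-Buechi
automata with the same structure recognize complementary languages, so the same pair of automata
also witnesses the Buechi statement.\<close>

(* The successor function of a deterministic automaton; a junk value elsewhere. *)
definition dstep :: "aut \<Rightarrow> nat \<Rightarrow> nat \<Rightarrow> nat" where
  "dstep A q a = (THE s. (q, a, s) \<in> trans A)"

definition dstate :: "aut \<Rightarrow> nat list \<Rightarrow> nat" where
  "dstate A u = foldl (dstep A) (init A) u"

lemma wf_aut_trans_in_states:
  assumes "wf_aut A" "(q, a, s) \<in> trans A"
  shows "q \<in> states A" "a \<in> alph A" "s \<in> states A"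
  using assms by (auto simp: wf_aut_def)

lemma deterministic_trans_iff:
  assumes "deterministic A" "q \<in> states A" "a \<in> alph A"
  shows "(q, a, s) \<in> trans A \<longleftrightarrow> s = dstep A q a"
proof -
  have "card (delta A q a) = 1" using assms by (simp add: deterministic_def)
  then obtain t where t: "delta A q a = {t}" by (rule card_1_singletonE)
  then have "(q, a, s) \<in> trans A \<longleftrightarrow> s = t" for s
    by (auto simp: delta_def)
  moreover from this have "dstep A q a = t"
    unfolding dstep_def by blast
  ultimately show ?thesis by simp
qed

lemma dstate_snoc [simp]: "dstate A (u @ [a]) = dstep A (dstate A u) a"
  by (simp add: dstate_def)

lemma dstate_in_states:
  assumes "deterministic A" "set u \<subseteq> alph A"
  shows "dstate A u \<in> states A"
  using assms(2)
proof (induction u rule: rev_induct)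
  case Nil
  then show ?case using assms(1) by (simp add: dstate_def deterministic_def wf_aut_def)
next
  case (snoc a u)
  then have "(dstate A u, a, dstate A (u @ [a])) \<in> trans A"
    using deterministic_trans_iff[OF assms(1)] by simp
  then show ?case
    using assms(1) wf_aut_trans_in_states by (auto simp: deterministic_def)
qed

lemma dstate_trans:
  assumes "deterministic A" "set u \<subseteq> alph A" "a \<in> alph A"
  shows "(dstate A u, a, dstate A (u @ [a])) \<in> trans A"
  using assms dstate_in_states deterministic_trans_iff by simp

lemma is_run_dstate:
  assumes "deterministic A" "is_word A w"
  shows "is_run A w (\<lambda>i. dstate A (map w [0..<i]))"
  unfolding is_run_def
proof (intro conjI allI)
  show "dstate A (map w [0..<0]) = init A" by (simp add: dstate_def)
  fix i
  have "set (map w [0..<i]) \<subseteq> alph A" "w i \<in> alph A"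
    using assms(2) by (auto simp: is_word_def)
  then show "(dstate A (map w [0..<i]), w i, dstate A (map w [0..<Suc i])) \<in> trans A"
    using dstate_trans[OF assms(1)] by simp
qed

lemma is_run_deterministic_unique:
  assumes "deterministic A" "is_run A w r"
  shows "r = (\<lambda>i. dstate A (map w [0..<i]))"
proof
  have wf: "wf_aut A" using assms(1) by (simp add: deterministic_def)
  fix i show "r i = dstate A (map w [0..<i])"
  proof (induction i)
    case 0
    then show ?case using assms(2) by (simp add: is_run_def dstate_def)
  next
    case (Suc i)
    have "(r i, w i, r (Suc i)) \<in> trans A" using assms(2) by (simp add: is_run_def)
    then have "r (Suc i) = dstep A (r i) (w i)"
      using deterministic_trans_iff[OF assms(1)] wf_aut_trans_in_states[OF wf] by blast
    then show ?case using Suc by simp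
  qed
qed

lemma lang_deterministic:
  assumes "deterministic A"
  shows "lang c A = {w. is_word A w \<and> accepting c A w (\<lambda>i. dstate A (map w [0..<i]))}"
  using is_run_dstate[OF assms] is_run_deterministic_unique[OF assms]
  by (auto simp: lang_def)

lemma gfg_deterministic:
  assumes "deterministic A"
  shows "gfg c A"
  unfolding gfg_def
proof (intro exI[of _ "dstate A"] conjI allI impI ballI)
  show "dstate A [] = init A" by (simp add: dstate_def)
  show "(dstate A u, a, dstate A (u @ [a])) \<in> trans A" if "set u \<subseteq> alph A" "a \<in> alph A" for u a
    using dstate_trans[OF assms that] .
  show "accepting c A w (\<lambda>i. dstate A (map w [0..<i]))" if "w \<in> lang c A" for w
    using that lang_deterministic[OF assms] by simp
qed

lemma deterministic_from_state:
  assumes "deterministic A" "q \<in> states A"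
  shows "deterministic (from_state A q)"
  using assms by (simp add: deterministic_def wf_aut_def delta_def from_state_def)

lemma nice_deterministic:
  assumes "deterministic A" "states A \<subseteq> reachable A" "sym ((safe_rel A)\<^sup>*)"
  shows "nice c A"
  unfolding nice_def
proof (intro conjI ballI allI impI)
  fix q assume q: "q \<in> states A"
  then show "q \<in> reachable A" using assms(2) by blast
  show "gfg c (from_state A q)"
    using gfg_deterministic deterministic_from_state[OF assms(1) q] .
  fix a assume a: "a \<in> alph A"
  have delta: "delta A q a = {dstep A q a}"
    using deterministic_trans_iff[OF assms(1) q a] by (auto simp: delta_def)
  then show "equiv_states c A s s'" if "s \<in> delta A q a" "s' \<in> delta A q a" for s s'
    using that by (simp add: equiv_states_def)
  have "delta_nacc A q a \<subseteq> {dstep A q a}"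
    using delta by (auto simp: delta_def delta_nacc_def)
  then show "card (delta_nacc A q a) \<le> 1"
    by (auto simp: subset_singleton_iff)
next
  fix q s assume "(q, s) \<in> (safe_rel A)\<^sup>*"
  then show "(s, q) \<in> (safe_rel A)\<^sup>*" using assms(3) by (simp add: sym_def)
qed

lemma accepting_CoBuchi_eventually:
  "accepting CoBuchi A w r \<longleftrightarrow> (\<forall>\<^sub>F i in sequentially. (r i, w i, r (Suc i)) \<notin> acc A)"
  unfolding accepting_def cofinite_eq_sequentially[symmetric] eventually_cofinite by simp

lemma lang_Buchi_deterministic:
  assumes "deterministic A"
  shows "lang Buchi A = {w. is_word A w} - lang CoBuchi A"
  using lang_deterministic[OF assms] by (auto simp: accepting_def)

lemma is_word_cong: "alph A = alph B \<Longrightarrow> is_word A = is_word B"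
  by (simp add: is_word_def fun_eq_iff)

lemma lang_Buchi_eq_iff_lang_CoBuchi_eq:
  assumes "deterministic A" "deterministic B" "alph A = alph B"
  shows "lang Buchi A = lang Buchi B \<longleftrightarrow> lang CoBuchi A = lang CoBuchi B"
proof -
  have "lang CoBuchi A \<subseteq> {w. is_word A w}" "lang CoBuchi B \<subseteq> {w. is_word A w}"
    using is_word_cong[OF assms(3)] by (auto simp: lang_def)
  then show ?thesis
    using lang_Buchi_deterministic[OF assms(1)] lang_Buchi_deterministic[OF assms(2)]
      is_word_cong[OF assms(3)] by auto
qed

lemma minimal_det_Buchi_iff:
  assumes "deterministic A"
  shows "minimal_det Buchi A \<longleftrightarrow> minimal_det CoBuchi A"
  using lang_Buchi_eq_iff_lang_CoBuchi_eq[OF _ assms] by (auto simp: minimal_det_def)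

lemma lang_CoBuchi_single_state:
  assumes "wf_aut B" "states B = {q}"
  shows "lang CoBuchi B = {w. is_word B w \<and> finite {i. (q, w i, q) \<in> acc B}}"
proof -
  have "r = (\<lambda>_. q)" if "is_run B w r" for w r
  proof
    fix i show "r i = q"
      using that assms wf_aut_trans_in_states(3)[OF assms(1)]
      by (cases i) (auto simp: is_run_def wf_aut_def)
  qed
  moreover have "is_run B w (\<lambda>_. q)" if "is_word B w" for w
  proof -
    have "(q, a, q) \<in> trans B" if "a \<in> alph B" for a
    proof -
      have "delta B q a \<noteq> {}" using that assms by (simp add: wf_aut_def)
      then obtain s where "(q, a, s) \<in> trans B" by (auto simp: delta_def)
      moreover from this have "s = q"
        using wf_aut_trans_in_states(3)[OF assms(1)] assms(2) by blast
      ultimately show ?thesis by simp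
    qed
    then show ?thesis
      using that assms by (simp add: is_run_def is_word_def wf_aut_def)
  qed
  ultimately show ?thesis by (auto simp: lang_def accepting_def)
qed

definition eventually_const_01 :: "(nat \<Rightarrow> nat) \<Rightarrow> bool" where
  "eventually_const_01 w \<longleftrightarrow> (\<exists>v\<in>{0, 1}. \<forall>\<^sub>F i in sequentially. w i = v)"

lemma not_eventually_const_01_alternating: "\<not> eventually_const_01 (\<lambda>i. i mod 2)"
proof
  assume "eventually_const_01 (\<lambda>i. i mod 2)"
  then obtain v N where "\<forall>i\<ge>N. i mod 2 = (v::nat)"
    by (auto simp: eventually_const_01_def eventually_sequentially)
  moreover have "2 * N \<ge> N" "2 * N + 1 \<ge> N" by simp_all
  ultimately have "(2 * N) mod 2 = (2 * N + 1) mod (2::nat)" by metis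
  then show False by simp
qed

lemma card_states_ge_2_if_eventually_const_01:
  assumes "wf_aut B" "{0, 1} \<subseteq> alph B"
    and L: "lang CoBuchi B = {w. is_word B w \<and> eventually_const_01 w}"
  shows "2 \<le> card (states B)"
proof (rule ccontr)
  assume "\<not> 2 \<le> card (states B)"
  moreover have "card (states B) > 0"
    using assms(1) by (auto simp: wf_aut_def card_gt_0_iff)
  ultimately have "card (states B) = 1" by linarith
  then obtain q where q: "states B = {q}" by (rule card_1_singletonE)
  note L_single = lang_CoBuchi_single_state[OF assms(1) q]
  have "(q, v, q) \<notin> acc B" if v: "v \<in> {0, 1}" for v
  proof
    assume "(q, v, q) \<in> acc B"
    moreover have "(\<lambda>_. v) \<in> lang CoBuchi B"
      using v assms(2) unfolding L eventually_const_01_def is_word_def by auto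
    ultimately show False by (simp add: L_single)
  qed
  then have "{i. (q, i mod 2, q) \<in> acc B} = {}"
    by (metis (no_types, lifting) empty_Collect_eq insert_iff mod2_eq_if)
  moreover have "is_word B (\<lambda>i. i mod 2)"
    using assms(2) by (auto simp: is_word_def mod2_eq_if)
  ultimately have "(\<lambda>i. i mod 2) \<in> lang CoBuchi B"
    by (simp add: L_single)
  then show False
    using not_eventually_const_01_alternating by (simp add: L)
qed

definition reset_trans :: "(nat \<Rightarrow> nat) \<Rightarrow> (nat \<times> nat \<times> nat) set" where
  "reset_trans f = {(q, a, s). q \<in> {0, 1} \<and> (a \<in> {0, 1} \<and> s = a \<or> a = 2 \<and> s = f q)}"

definition reset_aut :: "(nat \<Rightarrow> nat) \<Rightarrow> aut" where
  "reset_aut f = \<lparr>alph = {0, 1, 2}, states = {0, 1}, init = 0, trans = reset_trans f,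
     acc = reset_trans f - {(0, 0, 0), (1, 1, 1)}\<rparr>"

lemma deterministic_reset_aut:
  assumes "f ` {0, 1} \<subseteq> {0, 1}"
  shows "deterministic (reset_aut f)"
proof -
  have "delta (reset_aut f) q a = {if a = 2 then f q else a}" if "q \<in> {0, 1}" "a \<in> {0, 1, 2}" for q a
    using that by (auto simp: delta_def reset_aut_def reset_trans_def)
  then show ?thesis
    using assms by (auto simp: deterministic_def wf_aut_def reset_aut_def reset_trans_def)
qed

lemma nice_reset_aut:
  assumes "f ` {0, 1} \<subseteq> {0, 1}"
  shows "nice c (reset_aut f)"
proof (rule nice_deterministic[OF deterministic_reset_aut[OF assms]])
  have "(0, 1) \<in> {(q, s). \<exists>a. (q, a, s) \<in> trans (reset_aut f)}"
    by (auto simp: reset_aut_def reset_trans_def)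
  then show "states (reset_aut f) \<subseteq> reachable (reset_aut f)"
    by (auto simp: reachable_def reset_aut_def)
  have safe: "safe_rel (reset_aut f) \<subseteq> Id"
    by (auto simp: safe_rel_def reset_aut_def reset_trans_def)
  have "q = s" if "(q, s) \<in> (safe_rel (reset_aut f))\<^sup>*" for q s
    using that by (induction rule: rtrancl_induct) (use safe in auto)
  then show "sym ((safe_rel (reset_aut f))\<^sup>*)"
    by (auto simp: sym_def)
qed

lemma accepting_CoBuchi_reset_aut:
  assumes r: "is_run (reset_aut f) w r"
  shows "accepting CoBuchi (reset_aut f) w r \<longleftrightarrow> eventually_const_01 w"
proof -
  have tr: "(r i, w i, r (Suc i)) \<in> reset_trans f" for i
    using r by (simp add: is_run_def reset_aut_def)
  then have safe_iff: "(r i, w i, r (Suc i)) \<notin> acc (reset_aut f) \<longleftrightarrow>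
      (r i, w i, r (Suc i)) \<in> {(0, 0, 0), (1, 1, 1)}" for i
    by (auto simp: reset_aut_def)
  show ?thesis
    unfolding accepting_CoBuchi_eventually safe_iff
  proof
    assume "\<forall>\<^sub>F i in sequentially. (r i, w i, r (Suc i)) \<in> {(0, 0, 0), (1, 1, 1)}"
    then obtain N where "\<forall>i\<ge>N. (r i, w i, r (Suc i)) \<in> {(0, 0, 0), (1, 1, 1)}"
      unfolding eventually_sequentially by blast
    then have N: "r i \<in> {0, 1} \<and> w i = r i \<and> r (Suc i) = r i" if "i \<ge> N" for i
      using that by auto
    have const: "r i = r N" if "i \<ge> N" for i
      using that by (induction i rule: dec_induct) (use N in auto)
    have "w i = r N" if "i \<ge> N" for i
      using N[OF that] const[OF that] by simp
    then show "eventually_const_01 w"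
      unfolding eventually_const_01_def eventually_sequentially using N[of N] by blast
  next
    assume "eventually_const_01 w"
    then obtain v where v: "v \<in> {0, 1}" and wv: "\<forall>\<^sub>F i in sequentially. w i = v"
      by (auto simp: eventually_const_01_def)
    have "r (Suc i) = w i" if "w i \<in> {0, 1}" for i
      using tr[of i] that by (auto simp: reset_trans_def)
    then have "\<forall>\<^sub>F i in sequentially. r (Suc i) = v"
      using wv v by (auto elim: eventually_mono)
    then have "\<forall>\<^sub>F i in sequentially. r i = v"
      by (rule eventually_sequentially_Suc[THEN iffD1])
    with wv \<open>\<forall>\<^sub>F i in sequentially. r (Suc i) = v\<close>
    show "\<forall>\<^sub>F i in sequentially. (r i, w i, r (Suc i)) \<in> {(0, 0, 0), (1, 1, 1)}"
      by eventually_elim (use v in auto)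
  qed
qed

lemma lang_CoBuchi_reset_aut:
  assumes "f ` {0, 1} \<subseteq> {0, 1}"
  shows "lang CoBuchi (reset_aut f) = {w. is_word (reset_aut f) w \<and> eventually_const_01 w}"
  using lang_deterministic[OF deterministic_reset_aut[OF assms]]
    is_run_dstate[OF deterministic_reset_aut[OF assms]] accepting_CoBuchi_reset_aut
  by auto

lemma minimal_det_reset_aut:
  assumes "f ` {0, 1} \<subseteq> {0, 1}"
  shows "minimal_det CoBuchi (reset_aut f)"
  unfolding minimal_det_def
proof (intro conjI allI impI)
  show "deterministic (reset_aut f)" using deterministic_reset_aut[OF assms] .
  fix B assume B: "deterministic B" "alph B = alph (reset_aut f)"
    "lang CoBuchi B = lang CoBuchi (reset_aut f)"
  then have "lang CoBuchi B = {w. is_word B w \<and> eventually_const_01 w}"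
    using lang_CoBuchi_reset_aut[OF assms] is_word_cong[of B "reset_aut f"] by simp
  then have "2 \<le> card (states B)"
    using B card_states_ge_2_if_eventually_const_01
    by (simp add: deterministic_def reset_aut_def)
  then show "card (states (reset_aut f)) \<le> card (states B)"
    by (simp add: reset_aut_def)
qed

lemma not_isomorphic_reset_aut_id_swap: "\<not> isomorphic (reset_aut id) (reset_aut (\<lambda>q. 1 - q))"
proof
  assume "isomorphic (reset_aut id) (reset_aut (\<lambda>q. 1 - q))"
  then obtain \<kappa> where \<kappa>: "bij_betw \<kappa> {0, 1} {0, 1}"
    "\<forall>q\<in>{0, 1}. \<forall>q'\<in>{0, 1}. \<forall>a. q' \<in> delta_acc (reset_aut id) q a \<longleftrightarrow>
       \<kappa> q' \<in> delta_acc (reset_aut (\<lambda>q. 1 - q)) (\<kappa> q) a"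
    by (auto simp: isomorphic_def reset_aut_def)
  have "0 \<in> delta_acc (reset_aut id) 0 2"
    by (simp add: delta_acc_def reset_aut_def reset_trans_def)
  then have "\<kappa> 0 \<in> delta_acc (reset_aut (\<lambda>q. 1 - q)) (\<kappa> 0) 2"
    using \<kappa>(2) by blast
  moreover have "\<kappa> 0 \<in> {0, 1}" using \<kappa>(1) by (auto simp: bij_betw_def)
  ultimately show False
    by (auto simp: delta_acc_def reset_aut_def reset_trans_def)
qed

theorem mainTheorem12:
  shows "(\<exists>D1 D2. deterministic D1 \<and> deterministic D2 \<and> alph D1 = alph D2 \<and>
            lang CoBuchi D1 = lang CoBuchi D2 \<and>
            nice CoBuchi D1 \<and> nice CoBuchi D2 \<and>
            minimal_det CoBuchi D1 \<and> minimal_det CoBuchi D2 \<and>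
            \<not> isomorphic D1 D2) \<and>
         (\<exists>D1 D2. deterministic D1 \<and> deterministic D2 \<and> alph D1 = alph D2 \<and>
            lang Buchi D1 = lang Buchi D2 \<and>
            nice Buchi D1 \<and> nice Buchi D2 \<and>
            minimal_det Buchi D1 \<and> minimal_det Buchi D2 \<and>
            \<not> isomorphic D1 D2)"
proof -
  define D1 where "D1 = reset_aut id"
  define D2 where "D2 = reset_aut (\<lambda>q. 1 - q)"
  have maps: "id ` {0, 1} \<subseteq> {0, 1::nat}" "(\<lambda>q. 1 - q) ` {0, 1} \<subseteq> {0, 1::nat}"
    by auto
  have det: "deterministic D1" "deterministic D2"
    unfolding D1_def D2_def using deterministic_reset_aut maps by blast+
  have alph: "alph D1 = alph D2"
    by (simp add: D1_def D2_def reset_aut_def)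
  have lang_CoBuchi: "lang CoBuchi D1 = lang CoBuchi D2"
    using lang_CoBuchi_reset_aut maps is_word_cong[OF alph] by (simp add: D1_def D2_def)
  have lang: "lang c D1 = lang c D2" for c
    using lang_CoBuchi lang_Buchi_eq_iff_lang_CoBuchi_eq[OF det alph] by (cases c) simp_all
  have nice: "nice c D1" "nice c D2" for c
    unfolding D1_def D2_def using nice_reset_aut maps by blast+
  have "minimal_det CoBuchi D1" "minimal_det CoBuchi D2"
    unfolding D1_def D2_def using minimal_det_reset_aut maps by blast+
  then have minimal: "minimal_det c D1" "minimal_det c D2" for c
    using minimal_det_Buchi_iff det by (cases c; simp)+
  have "\<not> isomorphic D1 D2"
    unfolding D1_def D2_def by (rule not_isomorphic_reset_aut_id_swap)
  then have "\<exists>D1 D2. deterministic D1 \<and> deterministic D2 \<and> alph D1 = alph D2 \<and>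
      lang c D1 = lang c D2 \<and> nice c D1 \<and> nice c D2 \<and>
      minimal_det c D1 \<and> minimal_det c D2 \<and> \<not> isomorphic D1 D2" for c
    using det alph lang nice minimal by blast
  then show ?thesis by blast
qed

end
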